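(* Let $\mathcal{A}$ be a separating union-closed family with base set $[n]$ and height $h$, and suppose $h = 4 \leq n$ and $0 \leq |\mathcal{B}(\mathcal{A})| \leq 2$. Then there exists an element of $[n]$ that is contained in at least $\frac{|\mathcal{A}|}{2}$ member sets of $\mathcal{A}$.
   Context: A family of sets $\mathcal{A}$ is union-closed if it is a finite family of distinct finite sets with at least one nonempty member set, and $X,Y\in\mathcal{A}$ implies $X\cup Y\in\mathcal{A}$ (the empty set may be a member). For a family $\mathcal{F}$, $b(\mathcal{F})=\bigcup_{F\in\mathcal{F}}F$; the base set $b(\mathcal{A})$ is denoted $[n]=\{1,\dots,n\}$. $\mathcal{A}$ is separating if for any two distinct $x,y\in[n]$ there is $A\in\mathcal{A}$ containing exactly one of $x,y$. A chain in $\mathcal{A}$ is a subfamily any two distinct members of which are comparable under proper inclusion; the height $h$ of $\mathcal{A}$ is the maximum size of a chain in $\mathcal{A}$. For real $x\ge 0$, $\mathcal{A}_{<x}=\{A\in\mathcal{A} : |A|<x\}$. For $\mathcal{S}\subseteq\mathcal{A}$ and $S\in\mathcal{S}$, $\mathrm{irr}_{\mathcal{S}}(S)=\{s\in S : s\notin b(\mathcal{S}\setminus\{S\})\}$, and $\mathcal{S}$ is irredundant if $\mathrm{irr}_{\mathcal{S}}(S)\neq\emptyset$ for every $S\in\mathcal{S}$. Set $B=b(\mathcal{A}_{<n/2})$, and let $\mathcal{B}=\mathcal{B}(\mathcal{A})$ denote any irredundant subfamily of $\mathcal{A}_{<n/2}$ of minimum size such that $b(\mathcal{B})=B$. *)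

theory Defs
  imports Complex_Main
begin

definition union_closed :: "'a set set \<Rightarrow> bool" where
  "union_closed A \<longleftrightarrow> finite A \<and> (\<forall>X\<in>A. finite X) \<and> (\<exists>X\<in>A. X \<noteq> {}) \<and>
     (\<forall>X\<in>A. \<forall>Y\<in>A. X \<union> Y \<in> A)"

definition separating :: "'a set set \<Rightarrow> bool" where
  "separating A \<longleftrightarrow> (\<forall>x\<in>\<Union>A. \<forall>y\<in>\<Union>A. x \<noteq> y \<longrightarrow> (\<exists>X\<in>A. (x \<in> X) \<noteq> (y \<in> X)))"

definition is_chain :: "'a set set \<Rightarrow> bool" where
  "is_chain C \<longleftrightarrow> (\<forall>X\<in>C. \<forall>Y\<in>C. X \<noteq> Y \<longrightarrow> X \<subset> Y \<or> Y \<subset> X)"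

definition height :: "'a set set \<Rightarrow> nat" where
  "height A = Max {card C | C. C \<subseteq> A \<and> is_chain C}"

definition family_lt :: "'a set set \<Rightarrow> real \<Rightarrow> 'a set set" where
  "family_lt A x = {X\<in>A. real (card X) < x}"

definition irr :: "'a set set \<Rightarrow> 'a set \<Rightarrow> 'a set" where
  "irr S X = {s\<in>X. s \<notin> \<Union>(S - {X})}"

definition irredundant :: "'a set set \<Rightarrow> bool" where
  "irredundant S \<longleftrightarrow> (\<forall>X\<in>S. irr S X \<noteq> {})"

definition B_size :: "'a set set \<Rightarrow> nat \<Rightarrow> nat" where
  "B_size A n = (LEAST k. \<exists>S. S \<subseteq> family_lt A (real n / 2) \<and> irredundant S \<and>
       \<Union>S = \<Union>(family_lt A (real n / 2)) \<and> card S = k)"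

end

theory Submission
  imports Defs
begin

text \<open>
  Write \<open>n = |N|\<close> and call a member small if it has fewer than \<open>n/2\<close> elements. Double
  counting shows that some \<open>x \<in> S\<close> lies in at least half of the members as soon as
  \<open>\<Sum>Y. 2|Y \<inter> S| - |S| \<ge> 0\<close>. The hypothesis on \<open>\<B>(\<A>)\<close> says that the union \<open>B\<close> of
  the small members is the union of at most two small members; hence \<open>B \<in> \<A>\<close>, \<open>|B| < n\<close>,
  and every member not contained in \<open>B\<close> is large.

  If \<open>|N - B| \<ge> 2\<close> we average over \<open>N\<close>. Height 4 forbids chains \<open>V \<subset> B \<subset> M \<subset> M' \<subset> N\<close>.
  So if \<open>B\<close> has a proper subset in \<open>\<A>\<close>, two distinct members strictly between \<open>B\<close> and
  \<open>N\<close> have union \<open>N\<close>; with separation this makes every such member a co-singleton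
  \<open>N - {x}\<close>, and \<open>N - {x} \<in> \<A>\<close> for all but at most one \<open>x \<in> N - B\<close>. Likewise distinct
  proper subsets of \<open>B\<close> in \<open>\<A>\<close> have union \<open>B\<close>, so their complements in \<open>B\<close> are
  disjoint. These counts make the total excess nonnegative.

  If \<open>|N - B| = 1\<close>, then \<open>n = 2k + 1\<close> and \<open>B\<close> is the disjoint union of two \<open>k\<close>-sets
  \<open>X\<^sub>1, X\<^sub>2\<close>; we average over \<open>B\<close>. For distinct members \<open>Y, Y' \<subseteq> B\<close>, height 4 forces
  \<open>X\<^sub>1 \<subseteq> Y \<union> Y'\<close> or \<open>X\<^sub>2 \<subseteq> Y \<union> Y'\<close>, so the rectangles \<open>(X\<^sub>1 - Y) \<times> (X\<^sub>2 - Y)\<close>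
  are pairwise disjoint. Since \<open>k(k - |Y|) \<le> |X\<^sub>1 - Y| |X\<^sub>2 - Y|\<close>, the deficit of the
  members of \<open>B\<close> of size less than \<open>k\<close> is at most \<open>2k\<close>, which \<open>B\<close> itself makes up.
\<close>

definition excess :: "'a set \<Rightarrow> 'a set \<Rightarrow> int" where
  "excess S Y = 2 * int (card (Y \<inter> S)) - int (card S)"

lemma sum_card_Int_eq_sum_card_containing:
  assumes "finite A" "finite S"
  shows "(\<Sum>Y\<in>A. card (Y \<inter> S)) = (\<Sum>x\<in>S. card {Y\<in>A. x \<in> Y})"
proof -
  have "\<forall>Y\<in>A. card {x\<in>S. x \<in> Y} = card (Y \<inter> S)"
    by (auto intro!: arg_cong[where f = card])
  then show ?thesis
    using sum_multicount_gen[OF assms(2,1), of "\<lambda>x Y. x \<in> Y" "\<lambda>Y. card (Y \<inter> S)"]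
    by simp
qed

lemma exists_frequent_if_sum_excess_nonneg:
  assumes fin: "finite A" "finite S" and ne: "S \<noteq> {}" and nonneg: "0 \<le> sum (excess S) A"
  shows "\<exists>x\<in>S. real (card A) / 2 \<le> real (card {Y\<in>A. x \<in> Y})"
proof (rule ccontr)
  assume "\<not> ?thesis"
  then have "\<forall>x\<in>S. 2 * card {Y\<in>A. x \<in> Y} < card A"
    by force
  then have "(\<Sum>x\<in>S. 2 * card {Y\<in>A. x \<in> Y}) < (\<Sum>x\<in>S. card A)"
    using fin ne by (intro sum_strict_mono) auto
  then have "2 * (\<Sum>Y\<in>A. card (Y \<inter> S)) < card S * card A"
    by (simp add: sum_card_Int_eq_sum_card_containing[OF fin] sum_distrib_left)
  then have "2 * int (\<Sum>Y\<in>A. card (Y \<inter> S)) < int (card S) * int (card A)"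
    by (metis of_nat_less_iff of_nat_mult of_nat_numeral)
  moreover have "sum (excess S) A = 2 * int (\<Sum>Y\<in>A. card (Y \<inter> S)) - int (card S) * int (card A)"
    by (simp add: excess_def sum_subtractf sum_distrib_left of_nat_sum)
  ultimately show False
    using nonneg by linarith
qed

lemma union_closed_Union_mem:
  assumes "union_closed A" "F \<subseteq> A" "F \<noteq> {}"
  shows "\<Union>F \<in> A"
proof -
  have "finite F"
    using assms(1,2) finite_subset unfolding union_closed_def by blast
  show ?thesis
    using \<open>finite F\<close> assms(3,2)
  proof (induction F rule: finite_ne_induct)
    case (insert X F)
    then show ?case
      using assms(1) unfolding union_closed_def by simp
  qed simp
qed

lemma card_chain_le_height:
  assumes "finite A" "C \<subseteq> A" "is_chain C"
  shows "card C \<le> height A"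
proof -
  have "{card C |C. C \<subseteq> A \<and> is_chain C} \<subseteq> {..card A}"
    using assms(1) by (auto intro: card_mono)
  then have "finite {card C |C. C \<subseteq> A \<and> is_chain C}"
    by (rule finite_subset) simp
  then show ?thesis
    unfolding height_def using assms(2,3) by (auto intro: Max_ge)
qed

lemma no_strict_chain_5:
  assumes "finite A" "height A \<le> 4"
    and "V\<^sub>1 \<in> A" "V\<^sub>2 \<in> A" "V\<^sub>3 \<in> A" "V\<^sub>4 \<in> A" "V\<^sub>5 \<in> A"
    and "V\<^sub>1 \<subset> V\<^sub>2" "V\<^sub>2 \<subset> V\<^sub>3" "V\<^sub>3 \<subset> V\<^sub>4" "V\<^sub>4 \<subset> V\<^sub>5"
  shows False
proof -
  let ?C = "{V\<^sub>1, V\<^sub>2, V\<^sub>3, V\<^sub>4, V\<^sub>5}"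
  have "is_chain ?C"
    using assms(8-11) unfolding is_chain_def by auto
  then have "card ?C \<le> 4"
    using card_chain_le_height[OF assms(1), of ?C] assms(2-7) by auto
  moreover have "card ?C = 5"
  proof -
    have "V\<^sub>1 \<subset> V\<^sub>3" "V\<^sub>1 \<subset> V\<^sub>4" "V\<^sub>1 \<subset> V\<^sub>5" "V\<^sub>2 \<subset> V\<^sub>4" "V\<^sub>2 \<subset> V\<^sub>5" "V\<^sub>3 \<subset> V\<^sub>5"
      using assms(8-11) by (meson psubset_trans)+
    then have "V\<^sub>1 \<noteq> V\<^sub>2" "V\<^sub>1 \<noteq> V\<^sub>3" "V\<^sub>1 \<noteq> V\<^sub>4" "V\<^sub>1 \<noteq> V\<^sub>5" "V\<^sub>2 \<noteq> V\<^sub>3"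
      "V\<^sub>2 \<noteq> V\<^sub>4" "V\<^sub>2 \<noteq> V\<^sub>5" "V\<^sub>3 \<noteq> V\<^sub>4" "V\<^sub>3 \<noteq> V\<^sub>5" "V\<^sub>4 \<noteq> V\<^sub>5"
      using assms(8-11) by blast+
    then show ?thesis
      by simp
  qed
  ultimately show False
    by simp
qed

lemma sum_card_Diff_le_if_pairwise_Un_eq:
  assumes "finite B" "\<And>V. V \<in> W \<Longrightarrow> V \<subseteq> B"
    and "\<And>V V'. V \<in> W \<Longrightarrow> V' \<in> W \<Longrightarrow> V \<noteq> V' \<Longrightarrow> V \<union> V' = B"
  shows "(\<Sum>V\<in>W. card (B - V)) \<le> card B"
proof -
  have "finite W"
    using assms(1,2) by (meson Pow_iff finite_Pow_iff finite_subset subsetI)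
  then have "(\<Sum>V\<in>W. card (B - V)) = card (\<Union>V\<in>W. B - V)"
    using assms(1,3) by (subst card_UN_disjoint) blast+
  also have "\<dots> \<le> card B"
    using assms(1) by (intro card_mono) auto
  finally show ?thesis .
qed

lemma sum_card_Diff_times_le:
  assumes "finite X\<^sub>1" "finite X\<^sub>2" "finite D"
    and "\<And>Y Y'. Y \<in> D \<Longrightarrow> Y' \<in> D \<Longrightarrow> Y \<noteq> Y' \<Longrightarrow> X\<^sub>1 \<subseteq> Y \<union> Y' \<or> X\<^sub>2 \<subseteq> Y \<union> Y'"
  shows "(\<Sum>Y\<in>D. card (X\<^sub>1 - Y) * card (X\<^sub>2 - Y)) \<le> card X\<^sub>1 * card X\<^sub>2"
proof -
  have "(\<Sum>Y\<in>D. card (X\<^sub>1 - Y) * card (X\<^sub>2 - Y)) = (\<Sum>Y\<in>D. card ((X\<^sub>1 - Y) \<times> (X\<^sub>2 - Y)))"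
    by (simp add: card_cartesian_product)
  also have "\<dots> = card (\<Union>Y\<in>D. (X\<^sub>1 - Y) \<times> (X\<^sub>2 - Y))"
    using assms by (subst card_UN_disjoint) blast+
  also have "\<dots> \<le> card (X\<^sub>1 \<times> X\<^sub>2)"
    using assms(1,2) by (intro card_mono) auto
  finally show ?thesis
    by (simp add: card_cartesian_product)
qed

lemma card_Diff_times_card_Diff_ge:
  assumes "finite X\<^sub>1" "finite X\<^sub>2" "X\<^sub>1 \<inter> X\<^sub>2 = {}" "card X\<^sub>1 = k" "card X\<^sub>2 = k"
    and "Y \<subseteq> X\<^sub>1 \<union> X\<^sub>2"
  shows "int k * (int k - int (card Y)) \<le> int (card (X\<^sub>1 - Y) * card (X\<^sub>2 - Y))"
proof -
  define p where "p = card (X\<^sub>1 - Y)"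
  define q where "q = card (X\<^sub>2 - Y)"
  have "Y = (X\<^sub>1 \<inter> Y) \<union> (X\<^sub>2 \<inter> Y)"
    using assms(6) by blast
  then have "int (card Y) = int (card (X\<^sub>1 \<inter> Y)) + int (card (X\<^sub>2 \<inter> Y))"
    using assms(1-3) by (metis card_Un_disjoint disjoint_iff finite_Int IntD1 of_nat_add)
  moreover have "int (card (X\<^sub>1 \<inter> Y)) = int k - int p" "int (card (X\<^sub>2 \<inter> Y)) = int k - int q"
    unfolding p_def q_def using assms(1,2,4,5) card_Int_Diff by (metis add_diff_cancel_right' of_nat_add)+
  ultimately have card_Y: "int (card Y) = 2 * int k - int p - int q"
    by linarith
  have "int k * (int k - int (card Y)) = int p * int q - (int k - int p) * (int k - int q)"
    unfolding card_Y by (simp add: algebra_simps)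
  moreover have "int p \<le> int k" "int q \<le> int k"
    unfolding p_def q_def using assms(1,2,4,5) by (metis Diff_subset card_mono of_nat_le_iff)+
  ultimately show ?thesis
    unfolding p_def q_def by simp
qed

lemma height_4_counting_inequality:
  fixes b n m q :: int
  assumes "0 \<le> m" "m \<le> b" "b + 2 \<le> n" "n - b - 1 \<le> q"
  shows "0 \<le> (n + q * (n - 2)) + (2 * b - n) + (m * (2 * b - n) - 2 * b)"
proof (cases "n \<le> 2 * b")
  case True
  then have "0 \<le> m * (2 * b - n)" "0 \<le> q * (n - 2)"
    using assms by simp_all
  then show ?thesis
    by linarith
next
  case False
  have "b * (2 * b - n) \<le> m * (2 * b - n)"
    using False assms by (intro mult_right_mono_neg) auto
  moreover have "(n - b - 1) * (n - 2) \<le> q * (n - 2)"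
    using assms by (intro mult_right_mono) auto
  moreover have "b * (2 * b - n) + (n - b - 1) * (n - 2) = b * (b - 1) + (n - b - 1) * (n - b - 2)"
    by (simp add: algebra_simps)
  moreover have "0 \<le> b * (b - 1)" "0 \<le> (n - b - 1) * (n - b - 2)"
    using assms by (cases "b = 0"; simp)+
  ultimately show ?thesis
    by linarith
qed

locale uc_height_le_4 =
  fixes A :: "'a set set" and N :: "'a set"
  assumes union_closed: "union_closed A"
    and Union_eq: "\<Union>A = N"
    and height_le_4: "height A \<le> 4"
begin

lemma finite_family: "finite A"
  using union_closed unfolding union_closed_def by blast

lemma finite_N: "finite N"
  using union_closed Union_eq unfolding union_closed_def by blast

lemma Un_mem: "X \<in> A \<Longrightarrow> Y \<in> A \<Longrightarrow> X \<union> Y \<in> A"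
  using union_closed unfolding union_closed_def by blast

lemma N_mem: "N \<in> A"
proof -
  have "A \<noteq> {}"
    using union_closed unfolding union_closed_def by blast
  then show ?thesis
    using union_closed_Union_mem[OF union_closed subset_refl] Union_eq by simp
qed

lemma subset_N: "Y \<in> A \<Longrightarrow> Y \<subseteq> N"
  using Union_eq by blast

lemma no_chain_5:
  assumes "V\<^sub>1 \<in> A" "V\<^sub>2 \<in> A" "V\<^sub>3 \<in> A" "V\<^sub>4 \<in> A" "V\<^sub>5 \<in> A"
    and "V\<^sub>1 \<subset> V\<^sub>2" "V\<^sub>2 \<subset> V\<^sub>3" "V\<^sub>3 \<subset> V\<^sub>4" "V\<^sub>4 \<subset> V\<^sub>5"
  shows False
  using no_strict_chain_5[OF finite_family height_le_4 assms] .

lemma excess_N: "Y \<in> A \<Longrightarrow> excess N Y = 2 * int (card Y) - int (card N)"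
  unfolding excess_def using subset_N by (simp add: Int_absorb2)

end

text \<open>In the application \<open>B\<close> is \<open>b(\<A>_{<n/2})\<close>, the union of all members with fewer than
  \<open>n/2\<close> elements.\<close>

locale covered_small_sets = uc_height_le_4 +
  fixes B :: "'a set"
  assumes B_mem: "B \<in> A"
    and large_if_not_subset: "Y \<in> A \<Longrightarrow> \<not> Y \<subseteq> B \<Longrightarrow> card N \<le> 2 * card Y"
begin

lemma exists_separating_superset:
  assumes "separating A" "x \<in> N" "y \<in> N" "x \<noteq> y" "x \<notin> B" "y \<notin> B"
  obtains M where "M \<in> A" "B \<subseteq> M" "(x \<in> M) \<noteq> (y \<in> M)"
proof -
  obtain X where "X \<in> A" "(x \<in> X) \<noteq> (y \<in> X)"
    using assms(1-4) unfolding separating_def Union_eq by blast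
  then show ?thesis
    using that[of "B \<union> X"] Un_mem B_mem assms(5,6) by blast
qed

lemma exists_strictly_between:
  assumes "separating A" "2 \<le> card (N - B)"
  obtains M where "M \<in> A" "B \<subset> M" "M \<subset> N"
proof -
  obtain x y where "x \<in> N - B" "y \<in> N - B" "x \<noteq> y"
    using assms(2) card_le_Suc0_iff_eq[of "N - B"] finite_N by auto
  then obtain M where "M \<in> A" "B \<subseteq> M" "(x \<in> M) \<noteq> (y \<in> M)"
    using exists_separating_superset[OF assms(1)] by (metis DiffE)
  then show ?thesis
    using that[of M] subset_N \<open>x \<in> N - B\<close> \<open>y \<in> N - B\<close> by blast
qed

lemma strictly_between_Un_eq_N:
  assumes "V \<in> A" "V \<subset> B" and "M \<in> A" "M' \<in> A" "B \<subset> M" "B \<subset> M'" "M \<subset> N" "M' \<subset> N"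
    and "M \<noteq> M'"
  shows "M \<union> M' = N"
proof (rule ccontr)
  assume "M \<union> M' \<noteq> N"
  then have "M \<union> M' \<subset> N"
    using assms(7,8) by blast
  moreover have "M \<subset> M \<union> M' \<or> M' \<subset> M \<union> M'"
    using assms(9) by blast
  ultimately show False
    using no_chain_5[OF assms(1) B_mem _ Un_mem[OF assms(3,4)] N_mem assms(2)] assms(3-6)
    by (meson psubset_trans)
qed

lemma strictly_between_eq_N_Diff:
  assumes "separating A" "V \<in> A" "V \<subset> B" "M \<in> A" "B \<subset> M" "M \<subset> N" "z \<in> N - M"
  shows "M = N - {z}"
proof -
  have "y = z" if y: "y \<in> N - M" for y
  proof (rule ccontr)
    assume "y \<noteq> z"
    obtain M' where M': "M' \<in> A" "B \<subseteq> M'" "(y \<in> M') \<noteq> (z \<in> M')"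
      using exists_separating_superset[OF assms(1), of y z] \<open>y \<noteq> z\<close> y assms(5,7) by blast
    then have "B \<subset> M'" "M' \<subset> N" "M' \<noteq> M"
      using y assms(5,7) subset_N by auto
    then have "M \<union> M' = N"
      using strictly_between_Un_eq_N[OF assms(2,3,4) M'(1) assms(5)] assms(6) by blast
    then show False
      using M'(3) y assms(7) by blast
  qed
  then show ?thesis
    using assms(6,7) by blast
qed

lemma card_missing_co_singletons_le_1:
  assumes "separating A" "V \<in> A" "V \<subset> B"
  shows "card {x \<in> N - B. N - {x} \<notin> A} \<le> 1"
proof -
  have "x = y" if xy: "x \<in> N - B" "N - {x} \<notin> A" "y \<in> N - B" "N - {y} \<notin> A" for x y
  proof (rule ccontr)
    assume "x \<noteq> y"
    then obtain M where M: "M \<in> A" "B \<subseteq> M" "(x \<in> M) \<noteq> (y \<in> M)"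
      using exists_separating_superset[OF assms(1), of x y] xy by blast
    then have "B \<subset> M" "M \<subset> N"
      using xy subset_N by auto
    moreover obtain z where "z \<in> {x, y}" "z \<notin> M"
      using M(3) by blast
    ultimately have "M = N - {z}"
      using strictly_between_eq_N_Diff[OF assms M(1)] xy by blast
    then show False
      using M(1) \<open>z \<in> {x, y}\<close> xy by blast
  qed
  then show ?thesis
    using finite_N card_le_Suc0_iff_eq[of "{x \<in> N - B. N - {x} \<notin> A}"] by auto
qed

lemma proper_subsets_Un_eq:
  assumes "M \<in> A" "B \<subset> M" "M \<subset> N" and "V \<in> A" "V' \<in> A" "V \<subset> B" "V' \<subset> B" "V \<noteq> V'"
  shows "V \<union> V' = B"
proof (rule ccontr)
  assume "V \<union> V' \<noteq> B"
  then have "V \<union> V' \<subset> B"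
    using assms(6,7) by blast
  moreover have "V \<subset> V \<union> V' \<or> V' \<subset> V \<union> V'"
    using assms(8) by blast
  ultimately show False
    using no_chain_5[OF _ Un_mem[OF assms(4,5)] B_mem assms(1) N_mem _ _ assms(2,3)] assms(4,5)
    by blast
qed

lemma sum_excess_proper_subsets_ge:
  assumes "M \<in> A" "B \<subset> M" "M \<subset> N"
  defines "W \<equiv> {V \<in> A. V \<subset> B}"
  shows "card W \<le> card B"
    and "int (card W) * (2 * int (card B) - int (card N)) - 2 * int (card B) \<le> sum (excess N) W"
proof -
  have fin_B: "finite B"
    using finite_N subset_N[OF B_mem] finite_subset by blast
  have sum_le: "(\<Sum>V\<in>W. card (B - V)) \<le> card B"
  proof (rule sum_card_Diff_le_if_pairwise_Un_eq[OF fin_B])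
    show "V \<subseteq> B" if "V \<in> W" for V
      using that unfolding W_def by blast
    show "V \<union> V' = B" if "V \<in> W" "V' \<in> W" "V \<noteq> V'" for V V'
      using that unfolding W_def by (intro proper_subsets_Un_eq[OF assms(1-3)]) auto
  qed
  have "card W = (\<Sum>V\<in>W. 1)"
    by simp
  also have "\<dots> \<le> (\<Sum>V\<in>W. card (B - V))"
  proof (rule sum_mono)
    show "1 \<le> card (B - V)" if "V \<in> W" for V
      using that fin_B unfolding W_def by (simp add: Suc_le_eq card_gt_0_iff) blast
  qed
  finally show "card W \<le> card B"
    using sum_le by linarith
  have "excess N V = (2 * int (card B) - int (card N)) - 2 * int (card (B - V))" if "V \<in> W" for V
  proof -
    have "V \<in> A" "V \<subseteq> B"
      using that unfolding W_def by auto
    then have "int (card (B - V)) = int (card B) - int (card V)"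
      using fin_B by (simp add: card_Diff_subset finite_subset card_mono of_nat_diff)
    then show ?thesis
      using excess_N[OF \<open>V \<in> A\<close>] by simp
  qed
  then have "sum (excess N) W
      = int (card W) * (2 * int (card B) - int (card N)) - 2 * int (\<Sum>V\<in>W. card (B - V))"
    by (simp add: sum_subtractf sum_distrib_left of_nat_sum)
  then show "int (card W) * (2 * int (card B) - int (card N)) - 2 * int (card B) \<le> sum (excess N) W"
    using sum_le by linarith
qed

lemma sum_excess_not_subset_ge:
  assumes two_outside: "2 \<le> card (N - B)"
  defines "Q \<equiv> {x \<in> N - B. N - {x} \<in> A}"
  shows "int (card N) + int (card Q) * (int (card N) - 2) \<le> sum (excess N) {Y \<in> A. \<not> Y \<subseteq> B}"
proof -
  have not_in_singleton: "\<not> N - B \<subseteq> {x}" for x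
  proof
    assume "N - B \<subseteq> {x}"
    then have "card (N - B) \<le> 1"
      using card_mono[of "{x}" "N - B"] by simp
    then show False
      using two_outside by simp
  qed
  have inj: "inj_on (\<lambda>x. N - {x}) Q"
    unfolding inj_on_def Q_def by blast
  have "excess N (N - {x}) = int (card N) - 2" if "x \<in> Q" for x
  proof -
    have "x \<in> N" "N - {x} \<in> A"
      using that unfolding Q_def by auto
    then have "int (card N) = int (card (N - {x})) + 1"
      unfolding card.remove[OF finite_N \<open>x \<in> N\<close>] by simp
    then show ?thesis
      using excess_N[OF \<open>N - {x} \<in> A\<close>] by simp
  qed
  then have "sum (excess N) ((\<lambda>x. N - {x}) ` Q) = int (card Q) * (int (card N) - 2)"
    by (simp add: sum.reindex[OF inj])
  moreover have "N \<notin> (\<lambda>x. N - {x}) ` Q" "finite Q"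
    unfolding Q_def using finite_N by auto
  moreover have "excess N N = int (card N)"
    by (simp add: excess_def)
  ultimately have "int (card N) + int (card Q) * (int (card N) - 2)
      = sum (excess N) (insert N ((\<lambda>x. N - {x}) ` Q))"
    by simp
  also have "\<dots> \<le> sum (excess N) {Y \<in> A. \<not> Y \<subseteq> B}"
  proof (rule sum_mono2)
    show "finite {Y \<in> A. \<not> Y \<subseteq> B}"
      using finite_family by simp
    show "insert N ((\<lambda>x. N - {x}) ` Q) \<subseteq> {Y \<in> A. \<not> Y \<subseteq> B}"
      using N_mem not_in_singleton unfolding Q_def by blast
    show "0 \<le> excess N Y" if "Y \<in> {Y \<in> A. \<not> Y \<subseteq> B} - insert N ((\<lambda>x. N - {x}) ` Q)" for Y
    proof -
      have "Y \<in> A" "\<not> Y \<subseteq> B"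
        using that by blast+
      then show ?thesis
        using large_if_not_subset[of Y] excess_N[of Y] by simp
    qed
  qed
  finally show ?thesis .
qed


theorem sum_excess_N_nonneg:
  assumes sep: "separating A" and two_outside: "2 \<le> card (N - B)"
  shows "0 \<le> sum (excess N) A"
proof -
  define W where "W = {V \<in> A. V \<subset> B}"
  define Q where "Q = {x \<in> N - B. N - {x} \<in> A}"
  have "card (N - B) = card N - card B"
    using card_Diff_subset finite_N finite_subset subset_N[OF B_mem] by metis
  then have card_B: "card B + 2 \<le> card N"
    using two_outside by linarith
  have "sum (excess N) A = sum (excess N) (A - insert B W) + sum (excess N) (insert B W)"
    using finite_family B_mem by (intro sum.subset_diff) (auto simp: W_def)
  moreover have "A - insert B W = {Y \<in> A. \<not> Y \<subseteq> B}" "B \<notin> W" "finite W"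
    using finite_family unfolding W_def by auto
  ultimately have split: "sum (excess N) A = sum (excess N) {Y \<in> A. \<not> Y \<subseteq> B} + excess N B + sum (excess N) W"
    by simp
  have outside: "int (card N) + int (card Q) * (int (card N) - 2) \<le> sum (excess N) {Y \<in> A. \<not> Y \<subseteq> B}"
    using sum_excess_not_subset_ge[OF two_outside] unfolding Q_def .
  have excess_B: "excess N B = 2 * int (card B) - int (card N)"
    using excess_N[OF B_mem] .
  show ?thesis
  proof (cases "W = {}")
    case True
    have "0 \<le> int (card Q) * (int (card N) - 2)"
      using card_B by simp
    then show ?thesis
      using split outside excess_B True by simp
  next
    case False
    then obtain V where V: "V \<in> A" "V \<subset> B"
      unfolding W_def by blast
    obtain M where M: "M \<in> A" "B \<subset> M" "M \<subset> N"
      using exists_strictly_between[OF sep two_outside] .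
    have "N - B \<subseteq> Q \<union> {x \<in> N - B. N - {x} \<notin> A}"
      unfolding Q_def by blast
    then have "card (N - B) \<le> card (Q \<union> {x \<in> N - B. N - {x} \<notin> A})"
      using finite_N unfolding Q_def by (intro card_mono) auto
    also have "\<dots> \<le> card Q + card {x \<in> N - B. N - {x} \<notin> A}"
      by (rule card_Un_le)
    finally have "int (card N) - int (card B) - 1 \<le> int (card Q)"
      using card_missing_co_singletons_le_1[OF sep V] \<open>card (N - B) = _\<close> card_B by linarith
    moreover note sum_excess_proper_subsets_ge[OF M, folded W_def]
    ultimately show ?thesis
      using height_4_counting_inequality[of "int (card W)" "int (card B)" "int (card N)" "int (card Q)"]
        split outside excess_B card_B by linarith
  qed
qed

end

locale two_small_sets_cover = covered_small_sets +
  fixes X\<^sub>1 X\<^sub>2 :: "'a set"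
  assumes X\<^sub>1_mem: "X\<^sub>1 \<in> A" and X\<^sub>2_mem: "X\<^sub>2 \<in> A" and B_eq: "B = X\<^sub>1 \<union> X\<^sub>2"
    and small_X\<^sub>1: "2 * card X\<^sub>1 < card N" and small_X\<^sub>2: "2 * card X\<^sub>2 < card N"
    and one_outside: "card (N - B) = 1"
begin

lemma finite_B: "finite B"
  using finite_N subset_N[OF B_mem] finite_subset by blast

lemma finite_halves: "finite X\<^sub>1" "finite X\<^sub>2"
  using finite_B B_eq by auto

lemma card_halves:
  shows "card X\<^sub>2 = card X\<^sub>1" and "card B = 2 * card X\<^sub>1" and "card N = 2 * card X\<^sub>1 + 1"
    and "X\<^sub>1 \<inter> X\<^sub>2 = {}"
proof -
  have "card (N - B) = card N - card B" "card B \<le> card N"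
    using card_Diff_subset card_mono finite_B finite_N subset_N[OF B_mem] by metis+
  then have "card B + 1 = card N"
    using one_outside by linarith
  moreover have "card X\<^sub>1 + card X\<^sub>2 = card B + card (X\<^sub>1 \<inter> X\<^sub>2)"
    using card_Un_Int[OF finite_halves] B_eq by simp
  ultimately have "card X\<^sub>2 = card X\<^sub>1" "card B = 2 * card X\<^sub>1" "card N = 2 * card X\<^sub>1 + 1"
    and "card (X\<^sub>1 \<inter> X\<^sub>2) = 0"
    using small_X\<^sub>1 small_X\<^sub>2 by linarith+
  then show "card X\<^sub>2 = card X\<^sub>1" "card B = 2 * card X\<^sub>1" "card N = 2 * card X\<^sub>1 + 1"
    and "X\<^sub>1 \<inter> X\<^sub>2 = {}"
    using finite_halves by simp_all
qed

lemma B_psubset_N: "B \<subset> N"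
  using one_outside subset_N[OF B_mem] by auto

lemma subsets_Un_covers_half:
  assumes "Y \<in> A" "Y' \<in> A" "Y \<subseteq> B" "Y' \<subseteq> B" "Y \<noteq> Y'"
  shows "X\<^sub>1 \<subseteq> Y \<union> Y' \<or> X\<^sub>2 \<subseteq> Y \<union> Y'"
proof (rule ccontr)
  let ?V = "Y \<union> Y'"
  assume "\<not> ?thesis"
  then obtain a c where "a \<in> X\<^sub>1" "c \<in> X\<^sub>2" "a \<notin> ?V" "c \<notin> ?V"
    by blast
  then have chain: "?V \<subset> ?V \<union> X\<^sub>1" "?V \<union> X\<^sub>1 \<subset> B"
    using assms(3,4) B_eq card_halves(4) by blast+
  have mem: "?V \<in> A" "?V \<union> X\<^sub>1 \<in> A"
    using Un_mem assms(1,2) X\<^sub>1_mem by blast+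
  have "Y \<subset> ?V \<or> Y' \<subset> ?V"
    using assms(5) by blast
  then show False
    using no_chain_5[OF assms(1) mem B_mem N_mem _ chain B_psubset_N]
      no_chain_5[OF assms(2) mem B_mem N_mem _ chain B_psubset_N] by blast
qed

lemma sum_deficit_le:
  assumes "D \<subseteq> {Y \<in> A. Y \<subseteq> B}"
  shows "(\<Sum>Y\<in>D. int (card X\<^sub>1) - int (card Y)) \<le> int (card X\<^sub>1)"
proof -
  let ?k = "card X\<^sub>1"
  have fin_D: "finite D"
    by (rule finite_subset[OF assms]) (simp add: finite_family)
  have "(\<Sum>Y\<in>D. card (X\<^sub>1 - Y) * card (X\<^sub>2 - Y)) \<le> card X\<^sub>1 * card X\<^sub>2"
  proof (rule sum_card_Diff_times_le[OF finite_halves fin_D])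
    fix Y Y'
    assume "Y \<in> D" "Y' \<in> D" "Y \<noteq> Y'"
    then show "X\<^sub>1 \<subseteq> Y \<union> Y' \<or> X\<^sub>2 \<subseteq> Y \<union> Y'"
      using assms by (intro subsets_Un_covers_half) auto
  qed
  then have rectangles: "(\<Sum>Y\<in>D. card (X\<^sub>1 - Y) * card (X\<^sub>2 - Y)) \<le> ?k * ?k"
    by (simp only: card_halves(1))
  have "int ?k * (\<Sum>Y\<in>D. int ?k - int (card Y)) = (\<Sum>Y\<in>D. int ?k * (int ?k - int (card Y)))"
    by (rule sum_distrib_left)
  also have "\<dots> \<le> (\<Sum>Y\<in>D. int (card (X\<^sub>1 - Y) * card (X\<^sub>2 - Y)))"
  proof (rule sum_mono)
    fix Y
    assume "Y \<in> D"
    then have "Y \<subseteq> X\<^sub>1 \<union> X\<^sub>2"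
      using assms B_eq by blast
    then show "int ?k * (int ?k - int (card Y)) \<le> int (card (X\<^sub>1 - Y) * card (X\<^sub>2 - Y))"
      by (rule card_Diff_times_card_Diff_ge[OF finite_halves card_halves(4) refl card_halves(1)])
  qed
  also have "\<dots> = int (\<Sum>Y\<in>D. card (X\<^sub>1 - Y) * card (X\<^sub>2 - Y))"
    by (simp only: of_nat_sum)
  also have "\<dots> \<le> int (?k * ?k)"
    using rectangles by (simp only: of_nat_le_iff)
  finally have "int ?k * (\<Sum>Y\<in>D. int ?k - int (card Y)) \<le> int ?k * int ?k"
    by (simp only: of_nat_mult)
  moreover have "(\<Sum>Y\<in>D. int ?k - int (card Y)) \<le> 0" if "?k = 0"
    using that by (simp add: sum_nonpos)
  ultimately show ?thesis
    by (cases "?k = 0") (simp_all add: mult_le_cancel_left)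
qed

theorem sum_excess_B_nonneg: "0 \<le> sum (excess B) A"
proof -
  let ?k = "card X\<^sub>1"
  define D where "D = {Y \<in> A. Y \<subseteq> B \<and> card Y < ?k}"
  have "excess B Y \<ge> 0" if "Y \<in> A - D" for Y
  proof (cases "Y \<subseteq> B")
    case True
    then have "card X\<^sub>1 \<le> card Y"
      using that unfolding D_def by auto
    then show ?thesis
      using True card_halves unfolding excess_def by (simp add: Int_absorb2)
  next
    case False
    have "Y \<in> A"
      using that by blast
    then have "card Y = card (Y \<inter> B) + card (Y - B)"
      using finite_N subset_N finite_subset card_Int_Diff by metis
    moreover have "card (Y - B) \<le> card (N - B)"
      using \<open>Y \<in> A\<close> subset_N finite_N by (intro card_mono) auto
    moreover have "card N \<le> 2 * card Y"
      using large_if_not_subset[OF \<open>Y \<in> A\<close> False] .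
    ultimately have "?k \<le> card (Y \<inter> B)"
      using one_outside card_halves(3) by linarith
    then show ?thesis
      using card_halves(2) unfolding excess_def by simp
  qed
  moreover have "B \<in> A - D"
    using B_mem card_halves unfolding D_def by auto
  ultimately have rest: "excess B B \<le> sum (excess B) (A - D)"
    using finite_family by (intro member_le_sum) auto
  have "sum (excess B) D = (\<Sum>Y\<in>D. - 2 * (int ?k - int (card Y)))"
  proof (rule sum.cong[OF refl])
    fix Y
    assume "Y \<in> D"
    then have "Y \<inter> B = Y"
      unfolding D_def by blast
    then show "excess B Y = - 2 * (int ?k - int (card Y))"
      using card_halves(2) unfolding excess_def by simp
  qed
  also have "\<dots> = - 2 * (\<Sum>Y\<in>D. int ?k - int (card Y))"
    by (rule sum_distrib_left[symmetric])
  finally have small: "sum (excess B) D = - 2 * (\<Sum>Y\<in>D. int ?k - int (card Y))" .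
  have "(\<Sum>Y\<in>D. int ?k - int (card Y)) \<le> int ?k"
    by (rule sum_deficit_le) (auto simp: D_def)
  moreover have "excess B B = 2 * int ?k"
    using card_halves unfolding excess_def by simp
  moreover have "sum (excess B) A = sum (excess B) (A - D) + sum (excess B) D"
    using finite_family by (intro sum.subset_diff) (auto simp: D_def)
  ultimately show ?thesis
    using rest small by linarith
qed

end

lemma exists_irredundant_subfamily:
  assumes "finite L"
  shows "\<exists>S\<subseteq>L. irredundant S \<and> \<Union>S = \<Union>L"
proof -
  obtain S where S: "S \<subseteq> L" "\<Union>S = \<Union>L"
    and min: "\<And>S'. S' \<subseteq> L \<and> \<Union>S' = \<Union>L \<Longrightarrow> card S \<le> card S'"
    using ex_has_least_nat[of "\<lambda>S. S \<subseteq> L \<and> \<Union>S = \<Union>L" L card] by blast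
  have "irr S X \<noteq> {}" if X: "X \<in> S" for X
  proof
    assume "irr S X = {}"
    then have "X \<subseteq> \<Union>(S - {X})"
      unfolding irr_def by blast
    then have "\<Union>(S - {X}) = \<Union>S"
      using X by blast
    then have "\<Union>(S - {X}) = \<Union>L"
      using S(2) by simp
    then have "card S \<le> card (S - {X})"
      using S(1) by (intro min) auto
    moreover have "card (S - {X}) < card S"
      using finite_subset[OF S(1) assms] X by (rule card_Diff1_less)
    ultimately show False
      by simp
  qed
  then show ?thesis
    using S unfolding irredundant_def by blast
qed

lemma B_size_attained:
  assumes "finite A"
  obtains S where "S \<subseteq> family_lt A (real n / 2)" "irredundant S"
    "\<Union>S = \<Union>(family_lt A (real n / 2))" "card S = B_size A n"
proof -
  let ?F = "family_lt A (real n / 2)"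
  define P where "P k \<longleftrightarrow> (\<exists>S. S \<subseteq> ?F \<and> irredundant S \<and> \<Union>S = \<Union>?F \<and> card S = k)" for k
  have "finite ?F"
    using assms unfolding family_lt_def by simp
  then obtain S\<^sub>0 where "S\<^sub>0 \<subseteq> ?F" "irredundant S\<^sub>0" "\<Union>S\<^sub>0 = \<Union>?F"
    by (meson exists_irredundant_subfamily)
  then have "P (card S\<^sub>0)"
    unfolding P_def by blast
  then have "P (LEAST k. P k)"
    by (rule LeastI)
  moreover have "B_size A n = (LEAST k. P k)"
    unfolding B_size_def P_def ..
  ultimately show ?thesis
    using that unfolding P_def by auto
qed

lemma Union_eq_Un_if_card_le_2:
  assumes "S \<subseteq> L" "\<Union>S = \<Union>L" "finite S" "card S \<le> 2" "L \<noteq> {}"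
  obtains X\<^sub>1 X\<^sub>2 where "X\<^sub>1 \<in> L" "X\<^sub>2 \<in> L" "\<Union>L = X\<^sub>1 \<union> X\<^sub>2"
proof -
  consider "card S = 0" | "card S = 1" | "card S = 2"
    using assms(4) by linarith
  then show ?thesis
  proof cases
    case 1
    then have "\<Union>L = {}"
      using assms(2,3) by simp
    moreover obtain X where "X \<in> L"
      using assms(5) by blast
    ultimately show ?thesis
      using that[of X X] by blast
  next
    case 2
    then obtain X where "S = {X}"
      using card_1_singleton_iff[of S] by auto
    then have "X \<in> L" "\<Union>L = X \<union> X"
      using assms(1,2) by auto
    then show ?thesis
      using that by blast
  next
    case 3
    then obtain X Y where "S = {X, Y}"
      using card_2_iff[of S] by auto
    then have "X \<in> L" "Y \<in> L" "\<Union>L = X \<union> Y"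
      using assms(1,2) by auto
    then show ?thesis
      by (rule that)
  qed
qed

context uc_height_le_4
begin

lemma exists_frequent_if_no_small_sets:
  assumes "N \<noteq> {}" "\<And>Y. Y \<in> A \<Longrightarrow> card N \<le> 2 * card Y"
  shows "\<exists>x\<in>N. real (card A) / 2 \<le> real (card {Y \<in> A. x \<in> Y})"
proof -
  have "0 \<le> sum (excess N) A"
    using assms(2) excess_N by (intro sum_nonneg) fastforce
  then show ?thesis
    by (rule exists_frequent_if_sum_excess_nonneg[OF finite_family finite_N assms(1)])
qed

theorem exists_frequent_if_small_sets_covered_by_two:
  assumes sep: "separating A" and "4 \<le> card N"
    and X: "X\<^sub>1 \<in> A" "X\<^sub>2 \<in> A" "2 * card X\<^sub>1 < card N" "2 * card X\<^sub>2 < card N"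
    and covered: "\<And>Y. Y \<in> A \<Longrightarrow> 2 * card Y < card N \<Longrightarrow> Y \<subseteq> X\<^sub>1 \<union> X\<^sub>2"
  shows "\<exists>x\<in>N. real (card A) / 2 \<le> real (card {Y \<in> A. x \<in> Y})"
proof -
  interpret covered_small_sets A N "X\<^sub>1 \<union> X\<^sub>2"
  proof
    show "X\<^sub>1 \<union> X\<^sub>2 \<in> A"
      by (rule Un_mem[OF X(1,2)])
    show "card N \<le> 2 * card Y" if "Y \<in> A" "\<not> Y \<subseteq> X\<^sub>1 \<union> X\<^sub>2" for Y
      using covered that by (meson not_less)
  qed
  have "card (N - (X\<^sub>1 \<union> X\<^sub>2)) = card N - card (X\<^sub>1 \<union> X\<^sub>2)"
    using card_Diff_subset[OF finite_subset[OF subset_N[OF B_mem] finite_N] subset_N[OF B_mem]] .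
  then have "1 \<le> card (N - (X\<^sub>1 \<union> X\<^sub>2))"
    using card_Un_le[of X\<^sub>1 X\<^sub>2] X(3,4) by linarith
  then consider "2 \<le> card (N - (X\<^sub>1 \<union> X\<^sub>2))" | "card (N - (X\<^sub>1 \<union> X\<^sub>2)) = 1"
    by linarith
  then show ?thesis
  proof cases
    case 1
    have "N \<noteq> {}"
      using \<open>4 \<le> card N\<close> by auto
    then show ?thesis
      using exists_frequent_if_sum_excess_nonneg[OF finite_family finite_N] sum_excess_N_nonneg[OF sep 1]
      by blast
  next
    case 2
    interpret two_small_sets_cover A N "X\<^sub>1 \<union> X\<^sub>2" X\<^sub>1 X\<^sub>2
      using X 2 by unfold_locales auto
    have "X\<^sub>1 \<union> X\<^sub>2 \<noteq> {}"
      using card_halves(2,3) \<open>4 \<le> card N\<close> by auto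
    then show ?thesis
      using exists_frequent_if_sum_excess_nonneg[OF finite_family finite_B _ sum_excess_B_nonneg]
        subset_N[OF B_mem] by blast
  qed
qed

end

theorem corollary2p2:
  fixes A :: "nat set set" and n :: nat
  assumes "union_closed A"
    and "\<Union>A = {1..n}"
    and "separating A"
    and "height A = 4"
    and "4 \<le> n"
    and "B_size A n \<le> 2"
  shows "\<exists>x\<in>{1..n}. real (card {X\<in>A. x \<in> X}) \<ge> real (card A) / 2"
proof -
  interpret uc_height_le_4 A "{1..n}"
    using assms(1,2,4) by unfold_locales simp_all
  define L where "L = family_lt A (real n / 2)"
  have small_iff: "Y \<in> L \<longleftrightarrow> Y \<in> A \<and> 2 * card Y < card {1..n}" for Y
    unfolding L_def family_lt_def by auto
  show ?thesis
  proof (cases "L = {}")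
    case True
    then show ?thesis
      using exists_frequent_if_no_small_sets small_iff assms(5) by (simp add: not_less)
  next
    case False
    obtain S where "S \<subseteq> L" "\<Union>S = \<Union>L" "card S \<le> 2"
      using B_size_attained[OF finite_family, of n] assms(6) unfolding L_def by metis
    then obtain X\<^sub>1 X\<^sub>2 where "X\<^sub>1 \<in> L" "X\<^sub>2 \<in> L" "\<Union>L = X\<^sub>1 \<union> X\<^sub>2"
      using Union_eq_Un_if_card_le_2 False finite_subset finite_family small_iff by (metis subsetI)
    then show ?thesis
      using exists_frequent_if_small_sets_covered_by_two[OF assms(3), of X\<^sub>1 X\<^sub>2] small_iff assms(5)
      by (auto simp: Union_upper)
  qed
qed

end
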